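(* For $n=4$ agents and $n=4$ houses, on the preference domain $\mathcal{R}^>$ defined in the context, random serial dictatorship is not the only assignment rule satisfying equal treatment of equals, ex post efficiency and strategyproofness: there exists an assignment rule on $\mathcal{R}^>$ satisfying these three axioms that returns a different random assignment from RSD at some profile in $\mathcal{R}^>$.
   Context: Let $N$ be a set of $n$ agents and $H$ a set of $n$ houses. A preference profile assigns to each agent $i$ a strict linear order $\succ_i$ over $H$. The domain $\mathcal{R}^>$ consists of the profiles in which all agents have the same ranking over all but one house, i.e. there exist a house $h^*$ and a linear order on $H\setminus\{h^*\}$ such that every agent's preference restricted to $H\setminus\{h^*\}$ coincides with that order. An assignment rule on $\mathcal{R}^>$ maps each profile $R\in\mathcal{R}^>$ to a bistochastic matrix $f(R)$; $f(R,i,h)$ is the probability that $i$ gets $h$. Serial dictatorship $SD_\pi$ for a priority order $\pi$ lets agents in order $\pi$ take their most preferred remaining house; $RSD(R)=\frac1{n!}\sum_\pi SD_\pi(R)$. A deterministic assignment $M$ is efficient at $R$ if no other deterministic assignment $M'\ne M$ satisfies, for all $i$ and $h\ne h'$, $M'_{i,h'}=M_{i,h}=1\Rightarrow h'\succ_i h$; ex post efficiency: each $f(R)$ is a convex combination of deterministic assignments efficient at $R$. Strategyproofness (on $\mathcal{R}^>$): for all $i$ and all $R,R'\in\mathcal{R}^>$ differing only in agent $i$'s preference, $\sum_{h'\succ_i h}f(R,i,h')\ge\sum_{h'\succ_i h}f(R',i,h')$ for every $h$, where $\succ_i$ is $i$'s preference in $R$. Equal treatment of equals: $\succ_i=\succ_j$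 implies $f(R,i,h)=f(R,j,h)$ for all $h$. *)

theory Defs
  imports Complex_Main "HOL-Combinatorics.Multiset_Permutations"
begin

text \<open>A preference is a list enumerating
  all houses, most preferred first.\<close>

definition is_pref :: "nat \<Rightarrow> nat list \<Rightarrow> bool" where
  "is_pref n p \<longleftrightarrow> distinct p \<and> set p = {0..<n}"

definition rank :: "nat list \<Rightarrow> nat \<Rightarrow> nat" where
  "rank p h = length (takeWhile (\<lambda>x. x \<noteq> h) p)"

definition prefers :: "nat list \<Rightarrow> nat \<Rightarrow> nat \<Rightarrow> bool" where
  "prefers p a b \<longleftrightarrow> rank p a < rank p b"

definition is_profile :: "nat \<Rightarrow> (nat \<Rightarrow> nat list) \<Rightarrow> bool" where
  "is_profile n R \<longleftrightarrow> (\<forall>i<n. is_pref n (R i)) \<and> (\<forall>j\<ge>n. R j = [])"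

definition domain_gt :: "nat \<Rightarrow> (nat \<Rightarrow> nat list) \<Rightarrow> bool" where
  "domain_gt n R \<longleftrightarrow> is_profile n R \<and>
     (\<exists>hs<n. \<exists>L. \<forall>i<n. filter (\<lambda>h. h \<noteq> hs) (R i) = L)"

definition bistochastic :: "nat \<Rightarrow> (nat \<Rightarrow> nat \<Rightarrow> real) \<Rightarrow> bool" where
  "bistochastic n M \<longleftrightarrow> (\<forall>i<n. \<forall>h<n. M i h \<ge> 0) \<and>
     (\<forall>i<n. (\<Sum>h<n. M i h) = 1) \<and> (\<forall>h<n. (\<Sum>i<n. M i h) = 1)"

definition deterministic :: "nat \<Rightarrow> (nat \<Rightarrow> nat \<Rightarrow> real) \<Rightarrow> bool" where
  "deterministic n M \<longleftrightarrow> bistochastic n M \<and> (\<forall>i<n. \<forall>h<n. M i h = 0 \<or> M i h = 1)"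

definition efficient_at :: "nat \<Rightarrow> (nat \<Rightarrow> nat list) \<Rightarrow> (nat \<Rightarrow> nat \<Rightarrow> real) \<Rightarrow> bool" where
  "efficient_at n R M \<longleftrightarrow> deterministic n M \<and>
     \<not> (\<exists>M'. deterministic n M' \<and> (\<exists>i<n. \<exists>h<n. M' i h \<noteq> M i h) \<and>
          (\<forall>i<n. \<forall>h<n. \<forall>h'<n. h \<noteq> h' \<longrightarrow> M' i h' = 1 \<longrightarrow> M i h = 1 \<longrightarrow>
               prefers (R i) h' h))"

definition assignment_rule :: "nat \<Rightarrow> ((nat \<Rightarrow> nat list) \<Rightarrow> nat \<Rightarrow> nat \<Rightarrow> real) \<Rightarrow> bool" where
  "assignment_rule n f \<longleftrightarrow> (\<forall>R. domain_gt n R \<longrightarrow> bistochastic n (f R))"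

definition ex_post_efficient :: "nat \<Rightarrow> ((nat \<Rightarrow> nat list) \<Rightarrow> nat \<Rightarrow> nat \<Rightarrow> real) \<Rightarrow> bool" where
  "ex_post_efficient n f \<longleftrightarrow> (\<forall>R. domain_gt n R \<longrightarrow>
     (\<exists>(k::nat) (w::nat \<Rightarrow> real) (Ms::nat \<Rightarrow> nat \<Rightarrow> nat \<Rightarrow> real).
        (\<forall>l<k. w l \<ge> 0 \<and> efficient_at n R (Ms l)) \<and> (\<Sum>l<k. w l) = 1 \<and>
        (\<forall>i<n. \<forall>h<n. f R i h = (\<Sum>l<k. w l * Ms l i h))))"

definition strategyproof :: "nat \<Rightarrow> ((nat \<Rightarrow> nat list) \<Rightarrow> nat \<Rightarrow> nat \<Rightarrow> real) \<Rightarrow> bool" where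
  "strategyproof n f \<longleftrightarrow> (\<forall>i<n. \<forall>R R'. domain_gt n R \<longrightarrow> domain_gt n R' \<longrightarrow>
     (\<forall>j. j \<noteq> i \<longrightarrow> R j = R' j) \<longrightarrow>
     (\<forall>h<n. (\<Sum>h'\<in>{h'. h' < n \<and> prefers (R i) h' h}. f R i h')
            \<ge> (\<Sum>h'\<in>{h'. h' < n \<and> prefers (R i) h' h}. f R' i h')))"

definition equal_treatment :: "nat \<Rightarrow> ((nat \<Rightarrow> nat list) \<Rightarrow> nat \<Rightarrow> nat \<Rightarrow> real) \<Rightarrow> bool" where
  "equal_treatment n f \<longleftrightarrow> (\<forall>R. domain_gt n R \<longrightarrow>
     (\<forall>i<n. \<forall>j<n. R i = R j \<longrightarrow> (\<forall>h<n. f R i h = f R j h)))"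

fun sd_assign :: "(nat \<Rightarrow> nat list) \<Rightarrow> nat list \<Rightarrow> nat set \<Rightarrow> nat \<Rightarrow> nat" where
  "sd_assign R [] A = (\<lambda>_. 0)"
| "sd_assign R (i # is) A =
     (let h = hd (filter (\<lambda>x. x \<in> A) (R i)) in (sd_assign R is (A - {h}))(i := h))"

definition SD :: "nat \<Rightarrow> nat list \<Rightarrow> (nat \<Rightarrow> nat list) \<Rightarrow> nat \<Rightarrow> nat \<Rightarrow> real" where
  "SD n \<pi> R i h = (if sd_assign R \<pi> {0..<n} i = h then 1 else 0)"

definition RSD :: "nat \<Rightarrow> (nat \<Rightarrow> nat list) \<Rightarrow> nat \<Rightarrow> nat \<Rightarrow> real" where
  "RSD n R i h = (1 / fact n) * (\<Sum>\<pi>\<in>permutations_of_set {0..<n}. SD n \<pi> R i h)"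

end

(* The rule agrees with RSD except at eleven profiles, all in the part of the domain with h* = 2
   and common order 0 > 1 > 3 on the other houses, where RSD is replaced by a different lottery
   over serial dictatorships. Being a lottery over serial dictatorships at every profile, the rule
   is bistochastic and ex post efficient. Off the table, equal treatment and strategyproofness are
   those of RSD, which inherits them from serial dictatorship: equal agents can be swapped in the
   priority order, and a misreport never gets a dictator a better house. The remaining conditions
   are finitely many, each involving a tabulated profile (equal treatment there, and unilateral
   deviations into or out of it), and are checked by evaluation. *)

theory Submission
  imports Defs
begin

declare atLeast0LessThan [simp]

section \<open>Serial and random serial dictatorship\<close>

lemma rank_Cons: "rank (a # p) h = (if a = h then 0 else Suc (rank p h))"
  by (simp add: rank_def)

lemma hd_filter_mem:
  assumes "x \<in> set p" "P x"
  shows "hd (filter P p) \<in> set p \<and> P (hd (filter P p))"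
proof -
  have "filter P p \<noteq> []" using assms by (metis (mono_tags) filter_empty_conv)
  then have "hd (filter P p) \<in> set (filter P p)" by (rule hd_in_set)
  then show ?thesis by simp
qed

lemma rank_hd_filter_le:
  assumes "x \<in> set p" "P x"
  shows "rank p (hd (filter P p)) \<le> rank p x"
  using assms
proof (induction p)
  case (Cons a p)
  show ?case
  proof (cases "P a")
    case False
    with Cons.prems have "x \<in> set p" "x \<noteq> a" by auto
    moreover have "hd (filter P p) \<noteq> a"
      using hd_filter_mem[of x p P] \<open>x \<in> set p\<close> \<open>P x\<close> False by auto
    ultimately show ?thesis using False Cons.IH \<open>P x\<close> by (simp add: rank_Cons)
  qed (simp add: rank_Cons)
qed simp

text \<open>The defining equation of sd_assign binds the first choice with a let; this form avoids
  that, so that evaluation by the simplifier computes each choice before the rest of the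
  dictatorship instead of unfolding it symbolically.\<close>
lemma sd_assign_Cons:
  "sd_assign R (i # is) A =
     (sd_assign R is (A - {hd (filter (\<lambda>x. x \<in> A) (R i))}))(i := hd (filter (\<lambda>x. x \<in> A) (R i)))"
  by (simp add: Let_def)

lemma sd_assign_first_choice:
  assumes "A \<noteq> {}" "A \<subseteq> set (R i)"
  defines "h \<equiv> hd (filter (\<lambda>x. x \<in> A) (R i))"
  shows "h \<in> A" "\<And>x. x \<in> A \<Longrightarrow> rank (R i) h \<le> rank (R i) x"
proof -
  obtain x where "x \<in> A" using assms(1) by blast
  then show "h \<in> A"
    using hd_filter_mem[of x "R i" "\<lambda>x. x \<in> A"] assms(2) unfolding h_def by auto
  show "rank (R i) h \<le> rank (R i) x" if "x \<in> A" for x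
    using rank_hd_filter_le[of x "R i"] that assms(2) unfolding h_def by auto
qed

lemma sd_assign_in_inj_on:
  assumes "distinct is" "finite A" "length is \<le> card A" "\<forall>k\<in>set is. A \<subseteq> set (R k)"
  shows "(\<forall>i\<in>set is. sd_assign R is A i \<in> A) \<and> inj_on (sd_assign R is A) (set is)"
  using assms
proof (induction "is" arbitrary: A)
  case (Cons i "is")
  define h where "h = hd (filter (\<lambda>x. x \<in> A) (R i))"
  have hA: "h \<in> A" unfolding h_def by (rule sd_assign_first_choice) (use Cons.prems in auto)
  have "(\<forall>j\<in>set is. sd_assign R is (A - {h}) j \<in> A - {h}) \<and> inj_on (sd_assign R is (A - {h})) (set is)"
    by (rule Cons.IH) (use Cons.prems hA in \<open>auto simp: card_Diff_singleton\<close>)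
  then show ?case
    using hA Cons.prems(1) unfolding sd_assign_Cons h_def[symmetric]
    by (auto simp: inj_on_def)
qed simp

lemma sd_assign_Pareto_optimal:
  assumes "distinct is" "finite A" "length is \<le> card A" "\<forall>k\<in>set is. A \<subseteq> set (R k)"
    "inj_on \<sigma> (set is)" "\<sigma> ` set is \<subseteq> A"
    "\<forall>i\<in>set is. \<sigma> i \<noteq> sd_assign R is A i \<longrightarrow> prefers (R i) (\<sigma> i) (sd_assign R is A i)"
  shows "\<forall>i\<in>set is. \<sigma> i = sd_assign R is A i"
  using assms
proof (induction "is" arbitrary: A)
  case (Cons i "is")
  define h where "h = hd (filter (\<lambda>x. x \<in> A) (R i))"
  have eq: "sd_assign R (i # is) A = (sd_assign R is (A - {h}))(i := h)"
    unfolding h_def by (rule sd_assign_Cons)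
  have "\<sigma> i \<in> A" using Cons.prems(6) by auto
  then have "rank (R i) h \<le> rank (R i) (\<sigma> i)"
    unfolding h_def by (intro sd_assign_first_choice) (use Cons.prems in auto)
  then have \<sigma>i: "\<sigma> i = h" using Cons.prems(7) eq by (auto simp: prefers_def)
  have hA: "h \<in> A" using \<open>\<sigma> i \<in> A\<close> \<sigma>i by simp
  have i: "i \<notin> set is" using Cons.prems(1) by simp
  have "\<forall>j\<in>set is. \<sigma> j = sd_assign R is (A - {h}) j"
  proof (rule Cons.IH)
    show "\<sigma> ` set is \<subseteq> A - {h}"
    proof
      fix y assume "y \<in> \<sigma> ` set is"
      then obtain j where j: "j \<in> set is" "y = \<sigma> j" by auto
      then have "\<sigma> j \<noteq> \<sigma> i" using i Cons.prems(5) unfolding inj_on_def by force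
      then show "y \<in> A - {h}" using j Cons.prems(6) \<sigma>i by auto
    qed
    show "\<forall>j\<in>set is. \<sigma> j \<noteq> sd_assign R is (A - {h}) j \<longrightarrow>
        prefers (R j) (\<sigma> j) (sd_assign R is (A - {h}) j)"
      using Cons.prems(7) eq i by (metis fun_upd_other list.set_intros(2))
  qed (use Cons.prems hA in \<open>auto simp: card_Diff_singleton inj_on_def\<close>)
  then show ?case using \<sigma>i eq Cons.prems(1) by auto
qed simp

lemma sd_assign_misreport_rank_le:
  assumes "distinct is" "finite A" "length is \<le> card A"
    "\<forall>k\<in>set is. A \<subseteq> set (R k) \<and> A \<subseteq> set (R' k)"
    "\<forall>j. j \<noteq> i \<longrightarrow> R j = R' j" "i \<in> set is"
  shows "rank (R i) (sd_assign R is A i) \<le> rank (R i) (sd_assign R' is A i)"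
  using assms
proof (induction "is" arbitrary: A)
  case (Cons j "is")
  define h where "h = hd (filter (\<lambda>x. x \<in> A) (R j))"
  define h' where "h' = hd (filter (\<lambda>x. x \<in> A) (R' j))"
  have eq: "sd_assign R (j # is) A = (sd_assign R is (A - {h}))(j := h)"
    unfolding h_def by (rule sd_assign_Cons)
  have eq': "sd_assign R' (j # is) A = (sd_assign R' is (A - {h'}))(j := h')"
    unfolding h'_def by (rule sd_assign_Cons)
  have h'A: "h' \<in> A" unfolding h'_def by (rule sd_assign_first_choice) (use Cons.prems in auto)
  show ?case
  proof (cases "j = i")
    case True
    have "rank (R i) h \<le> rank (R i) h'"
      unfolding h_def True by (rule sd_assign_first_choice) (use Cons.prems h'A True in auto)
    then show ?thesis using eq eq' True by simp
  next
    case False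
    then have "h = h'" using Cons.prems(5) unfolding h_def h'_def by auto
    moreover have "h \<in> A" unfolding h_def by (rule sd_assign_first_choice) (use Cons.prems in auto)
    then have "rank (R i) (sd_assign R is (A - {h}) i) \<le> rank (R i) (sd_assign R' is (A - {h}) i)"
      by (intro Cons.IH) (use Cons.prems False in \<open>auto simp: card_Diff_singleton\<close>)
    ultimately show ?thesis using eq eq' False by simp
  qed
qed simp

lemma sd_assign_map:
  assumes "inj \<tau>"
  shows "sd_assign R (map \<tau> \<pi>) A (\<tau> x) = sd_assign (R \<circ> \<tau>) \<pi> A x"
  using assms by (induction \<pi> arbitrary: A) (auto simp: Let_def inj_eq)

lemma is_profileD: "is_profile n R \<Longrightarrow> i < n \<Longrightarrow> distinct (R i) \<and> set (R i) = {..<n}"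
  by (auto simp: is_profile_def is_pref_def)

lemma permutations_of_set_lessThanD:
  "\<pi> \<in> permutations_of_set {..<n} \<Longrightarrow> distinct \<pi> \<and> set \<pi> = {..<n} \<and> length \<pi> = n"
  by (auto simp: permutations_of_set_def distinct_card[symmetric])

lemma sd_assign_bij_betw:
  assumes "is_profile n R" "\<pi> \<in> permutations_of_set {..<n}"
  shows "bij_betw (sd_assign R \<pi> {..<n}) {..<n} {..<n}"
proof -
  have \<pi>: "distinct \<pi>" "set \<pi> = {..<n}" "length \<pi> = n"
    using permutations_of_set_lessThanD[OF assms(2)] by auto
  have "(\<forall>i\<in>set \<pi>. sd_assign R \<pi> {..<n} i \<in> {..<n}) \<and> inj_on (sd_assign R \<pi> {..<n}) (set \<pi>)"
    by (rule sd_assign_in_inj_on) (use \<pi> is_profileD[OF assms(1)] in auto)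
  then show ?thesis
    unfolding bij_betw_def using endo_inj_surj[of "{..<n}"] \<pi>(2) by auto
qed

lemma deterministic_SD:
  assumes "is_profile n R" "\<pi> \<in> permutations_of_set {..<n}"
  shows "deterministic n (SD n \<pi> R)"
proof -
  let ?s = "sd_assign R \<pi> {..<n}"
  have bij: "bij_betw ?s {..<n} {..<n}" by (rule sd_assign_bij_betw[OF assms])
  have col: "(\<Sum>i<n. SD n \<pi> R i h) = 1" if "h < n" for h
    using sum.reindex_bij_betw[OF bij, of "\<lambda>x. if x = h then 1 else 0"] that
    by (simp add: SD_def)
  show ?thesis
    using bij col unfolding deterministic_def bistochastic_def
    by (auto simp: SD_def bij_betw_def)
qed

lemma unique_one_in_stochastic_vector:
  fixes g :: "nat \<Rightarrow> real"
  assumes "\<forall>x<n. 0 \<le> g x" "(\<Sum>x<n. g x) = 1" "a < n" "b < n" "g a = 1" "g b = 1"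
  shows "a = b"
proof (rule ccontr)
  assume "a \<noteq> b"
  then have "(\<Sum>x\<in>{a, b}. g x) = 2" using assms(5,6) by simp
  moreover have "(\<Sum>x\<in>{a, b}. g x) \<le> (\<Sum>x<n. g x)"
    by (rule sum_mono2) (use assms(1,3,4) in auto)
  ultimately show False using assms(2) by simp
qed

lemma deterministicE:
  assumes "deterministic n M"
  obtains \<sigma> where "inj_on \<sigma> {..<n}" "\<sigma> ` {..<n} \<subseteq> {..<n}"
    "\<And>i h. i < n \<Longrightarrow> h < n \<Longrightarrow> M i h = (if \<sigma> i = h then 1 else 0)"
proof -
  have M: "\<forall>i<n. \<forall>h<n. M i h = 0 \<or> M i h = 1" "\<forall>i<n. \<forall>h<n. 0 \<le> M i h"
    "\<forall>i<n. (\<Sum>h<n. M i h) = 1" "\<forall>h<n. (\<Sum>i<n. M i h) = 1"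
    using assms unfolding deterministic_def bistochastic_def by auto
  have "\<exists>h<n. M i h = 1" if "i < n" for i
  proof (rule ccontr)
    assume "\<not> ?thesis"
    then have "\<forall>h\<in>{..<n}. M i h = 0" using M(1) that by auto
    then have "(\<Sum>h<n. M i h) = 0" by (rule sum.neutral)
    then show False using M(3) that by simp
  qed
  then obtain \<sigma> where \<sigma>: "\<And>i. i < n \<Longrightarrow> \<sigma> i < n \<and> M i (\<sigma> i) = 1" by metis
  have row: "M i h = 1 \<longleftrightarrow> \<sigma> i = h" if "i < n" "h < n" for i h
    using unique_one_in_stochastic_vector[of n "M i" h "\<sigma> i"] M \<sigma> that by auto
  show ?thesis
  proof
    show "inj_on \<sigma> {..<n}"
      using unique_one_in_stochastic_vector[of n "\<lambda>i. M i _"] M \<sigma> row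
      unfolding inj_on_def by (metis lessThan_iff)
    show "M i h = (if \<sigma> i = h then 1 else 0)" if "i < n" "h < n" for i h
      using row[OF that] M(1) that by auto
  qed (use \<sigma> in auto)
qed

lemma efficient_at_SD:
  assumes "is_profile n R" "\<pi> \<in> permutations_of_set {..<n}"
  shows "efficient_at n R (SD n \<pi> R)"
  unfolding efficient_at_def
proof (intro conjI notI)
  show "deterministic n (SD n \<pi> R)" by (rule deterministic_SD[OF assms])
  let ?s = "sd_assign R \<pi> {..<n}"
  have \<pi>: "distinct \<pi>" "set \<pi> = {..<n}" "length \<pi> = n"
    using permutations_of_set_lessThanD[OF assms(2)] by auto
  have s: "?s i < n" if "i < n" for i
    using sd_assign_bij_betw[OF assms] that by (auto simp: bij_betw_def)
  assume "\<exists>M'. deterministic n M' \<and> (\<exists>i<n. \<exists>h<n. M' i h \<noteq> SD n \<pi> R i h) \<and>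
    (\<forall>i<n. \<forall>h<n. \<forall>h'<n. h \<noteq> h' \<longrightarrow> M' i h' = 1 \<longrightarrow> SD n \<pi> R i h = 1 \<longrightarrow> prefers (R i) h' h)"
  then obtain M' where M': "deterministic n M'" and differs: "\<exists>i<n. \<exists>h<n. M' i h \<noteq> SD n \<pi> R i h"
    and improves: "\<forall>i<n. \<forall>h<n. \<forall>h'<n. h \<noteq> h' \<longrightarrow> M' i h' = 1 \<longrightarrow> SD n \<pi> R i h = 1 \<longrightarrow> prefers (R i) h' h"
    by blast
  obtain \<sigma> where \<sigma>: "inj_on \<sigma> {..<n}" "\<sigma> ` {..<n} \<subseteq> {..<n}"
    "\<And>i h. i < n \<Longrightarrow> h < n \<Longrightarrow> M' i h = (if \<sigma> i = h then 1 else 0)"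
    using deterministicE[OF M'] by blast
  have "\<forall>i\<in>set \<pi>. \<sigma> i = ?s i"
  proof (rule sd_assign_Pareto_optimal)
    show "\<forall>i\<in>set \<pi>. \<sigma> i \<noteq> ?s i \<longrightarrow> prefers (R i) (\<sigma> i) (?s i)"
    proof (intro ballI impI)
      fix i assume "i \<in> set \<pi>" "\<sigma> i \<noteq> ?s i"
      then have "i < n" "\<sigma> i < n" "?s i < n" using \<pi>(2) \<sigma>(2) s by auto
      then show "prefers (R i) (\<sigma> i) (?s i)"
        using improves \<open>\<sigma> i \<noteq> ?s i\<close> \<sigma>(3)[of i "\<sigma> i"] by (simp add: SD_def)
    qed
    show "\<forall>k\<in>set \<pi>. {..<n} \<subseteq> set (R k)"
      using is_profileD[OF assms(1)] \<pi>(2) by auto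
  qed (use \<pi> \<sigma>(1,2) in simp_all)
  then have "\<sigma> i = ?s i" if "i < n" for i using \<pi>(2) that by auto
  then show False using differs \<sigma>(3) unfolding SD_def by auto
qed

lemma RSD_equal_treatment:
  assumes "is_profile n R" "i < n" "j < n" "R i = R j"
  shows "RSD n R i h = RSD n R j h"
proof -
  let ?t = "Transposition.transpose i j"
  let ?P = "permutations_of_set {..<n}"
  have "map ?t ` ?P = ?P"
    by (rule permutations_of_set_image_permutes) (use assms(2,3) in \<open>simp add: permutes_swap_id\<close>)
  moreover have "inj_on (map ?t) ?P"
    by (rule inj_on_subset[OF inj_mapI[OF inj_transpose]]) simp
  ultimately have "(\<Sum>\<pi>\<in>?P. SD n \<pi> R i h) = (\<Sum>\<pi>\<in>?P. SD n (map ?t \<pi>) R i h)"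
    using sum.reindex[of "map ?t" ?P "\<lambda>\<pi>. SD n \<pi> R i h"] by simp
  also have "\<dots> = (\<Sum>\<pi>\<in>?P. SD n \<pi> R j h)"
  proof (rule sum.cong)
    fix \<pi>
    have "R \<circ> ?t = R" using assms(4) by (auto simp: transpose_def)
    then have "sd_assign R (map ?t \<pi>) {..<n} (?t j) = sd_assign R \<pi> {..<n} j"
      using sd_assign_map[OF inj_transpose[of i j], where R = R and \<pi> = \<pi> and A = "{..<n}" and x = j] by simp
    then show "SD n (map ?t \<pi>) R i h = SD n \<pi> R j h" by (simp add: SD_def)
  qed simp
  finally show ?thesis by (simp add: RSD_def)
qed

lemma RSD_upper_contour_mono:
  assumes "is_profile n R" "is_profile n R'" "\<forall>j. j \<noteq> i \<longrightarrow> R j = R' j" "i < n"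
  shows "(\<Sum>h'\<in>{h'. h' < n \<and> prefers (R i) h' h}. RSD n R' i h')
       \<le> (\<Sum>h'\<in>{h'. h' < n \<and> prefers (R i) h' h}. RSD n R i h')"
proof -
  let ?S = "{h'. h' < n \<and> prefers (R i) h' h}"
  let ?P = "permutations_of_set {..<n}"
  have upper_sum: "(\<Sum>h'\<in>?S. RSD n Q i h') =
      (1 / fact n) * (\<Sum>\<pi>\<in>?P. if sd_assign Q \<pi> {..<n} i \<in> ?S then 1 else 0)" for Q
  proof -
    have "(\<Sum>h'\<in>?S. RSD n Q i h') = 1 / fact n * (\<Sum>h'\<in>?S. \<Sum>\<pi>\<in>?P. SD n \<pi> Q i h')"
      unfolding RSD_def by (simp only: atLeast0LessThan sum_distrib_left)
    also have "\<dots> = 1 / fact n * (\<Sum>\<pi>\<in>?P. \<Sum>h'\<in>?S. SD n \<pi> Q i h')"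
      by (subst sum.swap) (rule refl)
    also have "\<dots> = 1 / fact n * (\<Sum>\<pi>\<in>?P. if sd_assign Q \<pi> {..<n} i \<in> ?S then 1 else 0)"
      by (simp add: SD_def sum.delta)
    finally show ?thesis .
  qed
  have "sd_assign R' \<pi> {..<n} i \<in> ?S \<Longrightarrow> sd_assign R \<pi> {..<n} i \<in> ?S" if "\<pi> \<in> ?P" for \<pi>
  proof -
    have \<pi>: "distinct \<pi>" "set \<pi> = {..<n}" "length \<pi> = n"
      using permutations_of_set_lessThanD[OF that] by auto
    have "rank (R i) (sd_assign R \<pi> {..<n} i) \<le> rank (R i) (sd_assign R' \<pi> {..<n} i)"
      by (rule sd_assign_misreport_rank_le)
        (use \<pi> assms is_profileD[OF assms(1)] is_profileD[OF assms(2)] in auto)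
    moreover have "sd_assign R \<pi> {..<n} i < n"
      using sd_assign_bij_betw[OF assms(1) that] assms(4) by (auto simp: bij_betw_def)
    ultimately show "sd_assign R' \<pi> {..<n} i \<in> ?S \<Longrightarrow> sd_assign R \<pi> {..<n} i \<in> ?S"
      by (auto simp: prefers_def)
  qed
  then show ?thesis
    unfolding upper_sum by (intro mult_left_mono sum_mono) auto
qed

section \<open>Lotteries over serial dictatorships\<close>

definition SD_weights :: "nat \<Rightarrow> (real \<times> nat list) list \<Rightarrow> bool" where
  "SD_weights n W \<longleftrightarrow>
     (\<forall>(w, \<pi>)\<in>set W. 0 \<le> w \<and> \<pi> \<in> permutations_of_set {..<n}) \<and> sum_list (map fst W) = 1"

definition SD_lottery :: "nat \<Rightarrow> (real \<times> nat list) list \<Rightarrow> (nat \<Rightarrow> nat list) \<Rightarrow> nat \<Rightarrow> nat \<Rightarrow> real" where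
  "SD_lottery n W R i h = (\<Sum>(w, \<pi>)\<leftarrow>W. w * SD n \<pi> R i h)"

lemma sum_SD_lottery:
  "(\<Sum>x\<in>A. SD_lottery n W R (i x) (h x)) = (\<Sum>(w, \<pi>)\<leftarrow>W. w * (\<Sum>x\<in>A. SD n \<pi> R (i x) (h x)))"
  by (induction W) (auto simp: SD_lottery_def sum.distrib sum_distrib_left)

lemma bistochastic_SD_lottery:
  assumes "is_profile n R" "SD_weights n W"
  shows "bistochastic n (SD_lottery n W R)"
proof -
  have W: "0 \<le> w" "deterministic n (SD n \<pi> R)" if "(w, \<pi>) \<in> set W" for w \<pi>
    using assms(2) deterministic_SD[OF assms(1)] that unfolding SD_weights_def by auto
  have total: "(\<Sum>(w, \<pi>)\<leftarrow>W. w * (\<Sum>x<n. SD n \<pi> R (i x) (h x))) = 1"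
    if "\<And>\<pi>. deterministic n (SD n \<pi> R) \<Longrightarrow> (\<Sum>x<n. SD n \<pi> R (i x) (h x)) = 1"
    for i h :: "nat \<Rightarrow> nat"
  proof -
    have "(\<Sum>(w, \<pi>)\<leftarrow>W. w * (\<Sum>x<n. SD n \<pi> R (i x) (h x))) = (\<Sum>(w, \<pi>)\<leftarrow>W. w)"
      by (rule arg_cong[where f = sum_list], rule map_cong) (use W that in auto)
    also have "\<dots> = 1"
      using assms(2) unfolding SD_weights_def by (simp add: case_prod_beta')
    finally show ?thesis .
  qed
  have "0 \<le> SD_lottery n W R i h" for i h
    unfolding SD_lottery_def by (rule sum_list_nonneg) (use W(1) in \<open>auto simp: SD_def\<close>)
  moreover have "(\<Sum>h<n. SD_lottery n W R i h) = 1" if "i < n" for i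
    using sum_SD_lottery[where A = "{..<n}" and i = "\<lambda>_. i" and h = "\<lambda>h. h"]
      total[of "\<lambda>_. i" "\<lambda>h. h"] that
    unfolding deterministic_def bistochastic_def by simp
  moreover have "(\<Sum>i<n. SD_lottery n W R i h) = 1" if "h < n" for h
    using sum_SD_lottery[where A = "{..<n}" and i = "\<lambda>i. i" and h = "\<lambda>_. h"]
      total[of "\<lambda>i. i" "\<lambda>_. h"] that
    unfolding deterministic_def bistochastic_def by simp
  ultimately show ?thesis unfolding bistochastic_def by blast
qed

lemma assignment_rule_if_SD_lotteries:
  assumes "\<And>R. domain_gt n R \<Longrightarrow> \<exists>W. SD_weights n W \<and> f R = SD_lottery n W R"
  shows "assignment_rule n f"
  unfolding assignment_rule_def
proof (intro allI impI)
  fix R assume R: "domain_gt n R"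
  then obtain W where "SD_weights n W" "f R = SD_lottery n W R" using assms by blast
  then show "bistochastic n (f R)"
    using bistochastic_SD_lottery R unfolding domain_gt_def by simp
qed

lemma ex_post_efficient_if_SD_lotteries:
  assumes "\<And>R. domain_gt n R \<Longrightarrow> \<exists>W. SD_weights n W \<and> f R = SD_lottery n W R"
  shows "ex_post_efficient n f"
  unfolding ex_post_efficient_def
proof (intro allI impI)
  fix R assume "domain_gt n R"
  then obtain W where W: "SD_weights n W" "f R = SD_lottery n W R" and R: "is_profile n R"
    using assms unfolding domain_gt_def by blast
  let ?w = "\<lambda>l. fst (W ! l)" and ?Ms = "\<lambda>l. SD n (snd (W ! l)) R"
  have weights: "\<forall>l<length W. ?w l \<ge> 0 \<and> efficient_at n R (?Ms l)"
  proof (intro allI impI)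
    fix l assume "l < length W"
    then have "(fst (W ! l), snd (W ! l)) \<in> set W" by simp
    then show "?w l \<ge> 0 \<and> efficient_at n R (?Ms l)"
      using W(1) efficient_at_SD[OF R] unfolding SD_weights_def by blast
  qed
  have total: "(\<Sum>l<length W. ?w l) = 1"
    using W(1) unfolding SD_weights_def by (simp add: sum_list_sum_nth)
  have mixture: "\<forall>i<n. \<forall>h<n. f R i h = (\<Sum>l<length W. ?w l * ?Ms l i h)"
    unfolding W(2) SD_lottery_def by (simp add: sum_list_sum_nth case_prod_beta')
  show "\<exists>(k::nat) w Ms. (\<forall>l<k. w l \<ge> 0 \<and> efficient_at n R (Ms l)) \<and> (\<Sum>l<k. w l) = 1 \<and>
      (\<forall>i<n. \<forall>h<n. f R i h = (\<Sum>l<k. w l * Ms l i h))"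
    by (intro exI conjI) (rule weights total mixture)+
qed

lemma SD_lottery_Pair:
  "SD_lottery n (map (Pair c) ps) R i h = c * (\<Sum>\<pi>\<leftarrow>ps. SD n \<pi> R i h)"
  unfolding SD_lottery_def by (induction ps) (simp_all add: algebra_simps)

lemma SD_weights_uniform:
  assumes "length ps = m" "0 < m" "set ps \<subseteq> permutations_of_set {..<n}"
  shows "SD_weights n (map (Pair (1 / m)) ps)"
  using assms by (auto simp: SD_weights_def comp_def sum_list_triv)

lemma RSD_eq_SD_lottery:
  assumes "distinct ps" "set ps = permutations_of_set {..<n}"
  shows "RSD n R = SD_lottery n (map (Pair (1 / fact n)) ps) R"
proof (intro ext)
  fix i h
  have "(\<Sum>\<pi>\<in>permutations_of_set {..<n}. SD n \<pi> R i h) = (\<Sum>\<pi>\<leftarrow>ps. SD n \<pi> R i h)"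
    using sum.distinct_set_conv_list[OF assms(1), of "\<lambda>\<pi>. SD n \<pi> R i h"] assms(2) by simp
  then show "RSD n R i h = SD_lottery n (map (Pair (1 / fact n)) ps) R i h"
    by (simp add: RSD_def SD_lottery_Pair)
qed

section \<open>A perturbation of RSD for four agents\<close>

lemma less_four_iff: "i < (4::nat) \<longleftrightarrow> i = 0 \<or> i = 1 \<or> i = 2 \<or> i = 3"
  by auto

definition perms4 :: "nat list list" where
  "perms4 = [[3, 2, 1, 0], [2, 3, 1, 0], [3, 1, 2, 0], [1, 3, 2, 0], [2, 1, 3, 0], [1, 2, 3, 0],
    [3, 2, 0, 1], [2, 3, 0, 1], [3, 0, 2, 1], [0, 3, 2, 1], [2, 0, 3, 1], [0, 2, 3, 1],
    [3, 1, 0, 2], [1, 3, 0, 2], [3, 0, 1, 2], [0, 3, 1, 2], [1, 0, 3, 2], [0, 1, 3, 2],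
    [2, 1, 0, 3], [1, 2, 0, 3], [2, 0, 1, 3], [0, 2, 1, 3], [1, 0, 2, 3], [0, 1, 2, 3]]"

lemma distinct_perms4: "distinct perms4"
  by (simp add: perms4_def)

lemma permutations_of_set_four: "permutations_of_set {..<4} = set perms4"
proof -
  have "{..<4} = set [0, 1, 2, 3 :: nat]" by (auto simp: less_four_iff)
  moreover have "permutations_of_set_list [0, 1, 2, 3] = perms4"
    by (simp add: permutations_of_set_list_def permutations_of_set_aux_list.simps perms4_def)
  ultimately show ?thesis using permutations_of_list[of "[0, 1, 2, 3 :: nat]"] by simp
qed

lemma is_profile_in_perms4: "is_profile 4 R \<Longrightarrow> i < 4 \<Longrightarrow> R i \<in> set perms4"
  using is_profileD[of 4 R i] by (simp add: permutations_of_set_four[symmetric] permutations_of_set_def)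

definition profile_of :: "nat list list \<Rightarrow> nat \<Rightarrow> nat list" where
  "profile_of K j = (if j < length K then K ! j else [])"

lemma profile_of_map: "is_profile n R \<Longrightarrow> profile_of (map R [0..<n]) = R"
  by (rule ext) (auto simp: profile_of_def is_profile_def)

lemma map_profile_of: "map (profile_of K) [0..<length K] = K"
  by (rule nth_equalityI) (auto simp: profile_of_def)

text \<open>A lottery is given by priority orders with
  multiplicities summing to 24, one of the 24 being drawn uniformly; off the table orders_at
  returns every order once, which is RSD.\<close>
definition lottery_table :: "(nat list list \<times> (nat \<times> nat list) list) list" where
  "lottery_table =
   [([[0, 1, 2, 3], [0, 1, 3, 2], [0, 2, 1, 3], [0, 2, 1, 3]],
      [(1, [0, 2, 1, 3]), (5, [0, 3, 1, 2]), (3, [1, 2, 3, 0]), (3, [1, 3, 2, 0]), (4, [2, 1, 0, 3]),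
       (2, [2, 3, 0, 1]), (6, [3, 2, 0, 1])]),
    ([[0, 1, 2, 3], [0, 1, 3, 2], [0, 2, 1, 3], [2, 0, 1, 3]],
      [(6, [0, 1, 3, 2]), (3, [1, 0, 2, 3]), (3, [1, 2, 3, 0]), (2, [2, 1, 0, 3]), (5, [2, 3, 0, 1]),
       (2, [3, 0, 2, 1]), (2, [3, 1, 2, 0]), (1, [3, 2, 1, 0])]),
    ([[0, 1, 2, 3], [0, 1, 3, 2], [2, 0, 1, 3], [0, 2, 1, 3]],
      [(2, [0, 1, 2, 3]), (3, [0, 3, 1, 2]), (3, [0, 3, 2, 1]), (4, [1, 0, 2, 3]), (4, [2, 1, 3, 0]),
       (2, [2, 3, 1, 0]), (4, [3, 0, 1, 2]), (2, [3, 1, 0, 2])]),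
    ([[0, 1, 3, 2], [0, 1, 2, 3], [0, 2, 1, 3], [0, 2, 1, 3]],
      [(1, [0, 1, 2, 3]), (2, [0, 2, 3, 1]), (3, [0, 3, 2, 1]), (5, [1, 0, 3, 2]), (1, [1, 2, 3, 0]),
       (4, [2, 0, 1, 3]), (1, [2, 0, 3, 1]), (1, [2, 1, 0, 3]), (6, [3, 2, 1, 0])]),
    ([[0, 1, 3, 2], [0, 1, 2, 3], [0, 2, 1, 3], [2, 0, 1, 3]],
      [(2, [0, 1, 2, 3]), (6, [0, 3, 1, 2]), (1, [1, 2, 0, 3]), (3, [1, 2, 3, 0]), (2, [2, 0, 1, 3]),
       (6, [2, 3, 0, 1]), (4, [3, 1, 2, 0])]),
    ([[0, 1, 3, 2], [0, 1, 2, 3], [2, 0, 1, 3], [0, 2, 1, 3]],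
      [(5, [0, 2, 1, 3]), (3, [0, 3, 2, 1]), (3, [1, 3, 0, 2]), (1, [2, 1, 0, 3]), (4, [2, 1, 3, 0]),
       (3, [2, 3, 1, 0]), (2, [3, 0, 1, 2]), (3, [3, 2, 0, 1])]),
    ([[0, 1, 3, 2], [0, 1, 3, 2], [0, 1, 2, 3], [0, 2, 1, 3]],
      [(2, [0, 1, 2, 3]), (2, [0, 2, 1, 3]), (2, [0, 3, 1, 2]), (6, [1, 3, 2, 0]), (2, [2, 0, 1, 3]),
       (4, [2, 1, 3, 0]), (6, [3, 0, 1, 2])]),
    ([[0, 1, 3, 2], [0, 1, 3, 2], [0, 2, 1, 3], [0, 1, 2, 3]],
      [(2, [0, 1, 2, 3]), (2, [0, 1, 3, 2]), (2, [0, 3, 1, 2]), (6, [1, 3, 2, 0]), (6, [2, 0, 3, 1]),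
       (2, [3, 0, 1, 2]), (4, [3, 2, 1, 0])]),
    ([[0, 1, 3, 2], [0, 1, 3, 2], [0, 2, 1, 3], [0, 2, 1, 3]],
      [(4, [0, 2, 3, 1]), (2, [0, 3, 2, 1]), (2, [1, 2, 0, 3]), (2, [1, 3, 0, 2]), (2, [1, 3, 2, 0]),
       (4, [2, 0, 1, 3]), (2, [2, 1, 3, 0]), (6, [3, 1, 2, 0])]),
    ([[0, 1, 3, 2], [0, 1, 3, 2], [0, 2, 1, 3], [2, 0, 1, 3]],
      [(4, [0, 2, 3, 1]), (2, [1, 2, 0, 3]), (8, [2, 1, 3, 0]), (4, [3, 0, 2, 1]), (6, [3, 1, 0, 2])]),
    ([[0, 1, 3, 2], [0, 1, 3, 2], [2, 0, 1, 3], [0, 2, 1, 3]],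
      [(6, [0, 1, 2, 3]), (2, [0, 3, 2, 1]), (2, [1, 3, 0, 2]), (2, [1, 3, 2, 0]), (4, [2, 1, 3, 0]),
       (2, [2, 3, 1, 0]), (6, [3, 0, 2, 1])])]"

definition orders_at :: "nat list list \<Rightarrow> nat list list" where
  "orders_at K = (case map_of lottery_table K of
     Some W \<Rightarrow> concat (map (\<lambda>(m, \<pi>). replicate m \<pi>) W)
   | None \<Rightarrow> perms4)"

definition perturbed_RSD :: "(nat \<Rightarrow> nat list) \<Rightarrow> nat \<Rightarrow> nat \<Rightarrow> real" where
  "perturbed_RSD R = SD_lottery 4 (map (Pair (1 / 24)) (orders_at (map R [0..<4]))) R"

definition shares :: "nat list list \<Rightarrow> nat \<Rightarrow> nat list" where
  "shares K i =
     (let outcomes = map (\<lambda>\<pi>. sd_assign (profile_of K) \<pi> {..<4} i) (orders_at K)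
      in map (\<lambda>h. \<Sum>x\<leftarrow>outcomes. if x = h then 1 else 0) [0, 1, 2, 3])"

definition upper_share :: "nat list \<Rightarrow> nat list \<Rightarrow> nat \<Rightarrow> nat" where
  "upper_share p s h = (\<Sum>h'\<leftarrow>[0, 1, 2, 3]. if prefers p h' h then s ! h' else 0)"

definition in_domain4 :: "nat list list \<Rightarrow> bool" where
  "in_domain4 K \<longleftrightarrow> (\<exists>hs\<in>set [0, 1, 2, 3]. \<forall>k\<in>set [0, 1, 2, 3].
     filter (\<lambda>h. h \<noteq> hs) (K ! k) = filter (\<lambda>h. h \<noteq> hs) (K ! 0))"

text \<open>The argument s stands for shares K i. One check covers the deviation of agent i from K to
  K[i := p] as well as the one back, so only the tabulated profiles K need to be checked.\<close>
definition no_gain_between :: "nat list list \<Rightarrow> nat \<Rightarrow> nat list \<Rightarrow> nat list \<Rightarrow> bool" where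
  "no_gain_between K i s p \<longleftrightarrow>
     (if p \<noteq> K ! i \<and> in_domain4 (K[i := p]) then
        (let s' = shares (K[i := p]) i in \<forall>h\<in>set [0, 1, 2, 3].
          upper_share (K ! i) s' h \<le> upper_share (K ! i) s h \<and> upper_share p s h \<le> upper_share p s' h)
      else True)"

fun table_entry_ok :: "nat list list \<times> (nat \<times> nat list) list \<Rightarrow> bool" where
  "table_entry_ok (K, W) \<longleftrightarrow>
     sum_list (map fst W) = 24 \<and> (\<forall>(m, \<pi>)\<in>set W. \<pi> \<in> set perms4) \<and>
     (let S = map (shares K) [0, 1, 2, 3] in
       (\<forall>i\<in>set [0, 1, 2, 3]. \<forall>j\<in>set [0, 1, 2, 3]. K ! i = K ! j \<longrightarrow> S ! i = S ! j) \<and>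
       (\<forall>i\<in>set [0, 1, 2, 3]. \<forall>p\<in>set perms4. no_gain_between K i (S ! i) p))"

text \<open>The first pass only expands the finite quantifiers, so that the evaluating second pass
  never simplifies terms with an unknown agent or order.\<close>
lemma lottery_table_ok: "\<forall>e\<in>set lottery_table. table_entry_ok e"
  by (simp only: lottery_table_def list.set ball_simps(5,7) table_entry_ok.simps perms4_def)
    (simp add: no_gain_between_def in_domain4_def upper_share_def shares_def orders_at_def
      lottery_table_def profile_of_def prefers_def rank_def Let_def sum_list_replicate perms4_def
      sd_assign_Cons del: sd_assign.simps(2))

lemma table_entry_ok_lookup: "map_of lottery_table K = Some W \<Longrightarrow> table_entry_ok (K, W)"
  by (rule bspec[OF lottery_table_ok map_of_SomeD])

lemma nth_map_four: "i < 4 \<Longrightarrow> map f [0, 1, 2, 3] ! i = f i"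
  by (auto simp: less_four_iff)

lemma orders_at_valid: "length (orders_at K) = 24 \<and> set (orders_at K) \<subseteq> set perms4"
proof (cases "map_of lottery_table K")
  case None
  then have "orders_at K = perms4" by (simp add: orders_at_def)
  then show ?thesis by (simp add: perms4_def)
next
  case (Some W)
  then have "sum_list (map fst W) = 24" "\<forall>(m, \<pi>)\<in>set W. \<pi> \<in> set perms4"
    using table_entry_ok_lookup[OF Some] unfolding table_entry_ok.simps by blast+
  moreover have "length (concat (map (\<lambda>(m, \<pi>). replicate m \<pi>) W)) = sum_list (map fst W)"
    by (induction W) auto
  ultimately show ?thesis using Some by (auto simp: orders_at_def)
qed

lemma perturbed_RSD_SD_lottery: "\<exists>W. SD_weights 4 W \<and> perturbed_RSD R = SD_lottery 4 W R"
  using SD_weights_uniform[of "orders_at (map R [0..<4])" 24 4] orders_at_valid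
  unfolding perturbed_RSD_def permutations_of_set_four by auto

lemma RSD_four: "RSD 4 R = SD_lottery 4 (map (Pair (1 / 24)) perms4) R"
  using RSD_eq_SD_lottery[OF distinct_perms4 permutations_of_set_four[symmetric]]
  by (simp add: fact_numeral)

lemma perturbed_RSD_eq_RSD:
  "map_of lottery_table (map R [0..<4]) = None \<Longrightarrow> perturbed_RSD R = RSD 4 R"
  by (simp add: perturbed_RSD_def orders_at_def RSD_four)

lemma perturbed_RSD_profile_of:
  assumes "length K = 4" "h < 4"
  shows "perturbed_RSD (profile_of K) i h = real (shares K i ! h) / 24"
proof -
  have "map (profile_of K) [0..<4] = K" using map_profile_of[of K] assms(1) by simp
  then have "perturbed_RSD (profile_of K) i h = (\<Sum>\<pi>\<leftarrow>orders_at K. SD 4 \<pi> (profile_of K) i h) / 24"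
    by (simp add: perturbed_RSD_def SD_lottery_Pair)
  moreover have "shares K i ! h =
      (\<Sum>\<pi>\<leftarrow>orders_at K. if sd_assign (profile_of K) \<pi> {..<4} i = h then 1 else 0)"
    unfolding shares_def Let_def nth_map_four[OF assms(2)] by (simp add: comp_def)
  moreover have "real (\<Sum>\<pi>\<leftarrow>ps. if sd_assign (profile_of K) \<pi> {..<4} i = h then 1 else 0) =
      (\<Sum>\<pi>\<leftarrow>ps. SD 4 \<pi> (profile_of K) i h)" for ps
    by (induction ps) (simp_all add: SD_def)
  ultimately show ?thesis by simp
qed

lemma sum_lessThan_four: "(\<Sum>h<(4::nat). g h) = (\<Sum>h\<leftarrow>[0, 1, 2, 3]. g h)"
  by (simp add: numeral_eq_Suc add.assoc)

lemma upper_contour_perturbed_RSD: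
  assumes "length K = 4"
  shows "(\<Sum>h'\<in>{h'. h' < 4 \<and> prefers p h' h}. perturbed_RSD (profile_of K) i h') =
    real (upper_share p (shares K i) h) / 24"
proof -
  let ?f = "perturbed_RSD (profile_of K) i"
  have "(\<Sum>h'\<in>{h'. h' < 4 \<and> prefers p h' h}. ?f h') = (\<Sum>h'<4. if prefers p h' h then ?f h' else 0)"
    using sum.inter_filter[of "{..<4}" ?f "\<lambda>h'. prefers p h' h"] by simp
  also have "\<dots> = (\<Sum>h'\<leftarrow>[0, 1, 2, 3]. if prefers p h' h then ?f h' else 0)"
    by (rule sum_lessThan_four)
  also have "\<dots> = (\<Sum>h'\<leftarrow>[0, 1, 2, 3]. if prefers p h' h then real (shares K i ! h') / 24 else 0)"
    by (rule arg_cong[where f = sum_list], rule map_cong)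
      (auto simp: perturbed_RSD_profile_of[OF assms] less_four_iff)
  also have "\<dots> = real (upper_share p (shares K i) h) / 24"
  proof -
    have "(\<Sum>x\<leftarrow>xs. if prefers p x h then real (shares K i ! x) / 24 else 0) =
        real (\<Sum>x\<leftarrow>xs. if prefers p x h then shares K i ! x else 0) / 24" for xs
      by (induction xs) (auto simp: add_divide_distrib)
    then show ?thesis unfolding upper_share_def .
  qed
  finally show ?thesis .
qed

lemma in_domain4_map: "domain_gt 4 R \<Longrightarrow> in_domain4 (map R [0..<4])"
proof -
  assume "domain_gt 4 R"
  then obtain hs L where "hs < 4" "\<forall>i<4. filter (\<lambda>h. h \<noteq> hs) (R i) = L"
    unfolding domain_gt_def by blast
  then show ?thesis
    unfolding in_domain4_def by (intro bexI[of _ hs]) (auto simp: less_four_iff)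
qed

lemma perturbed_RSD_equal_treatment: "equal_treatment 4 perturbed_RSD"
  unfolding equal_treatment_def
proof (intro allI impI)
  fix R and i j h :: nat
  assume R: "domain_gt 4 R" and ij: "i < 4" "j < 4" "R i = R j" and h: "h < 4"
  define K where "K = map R [0..<4]"
  have prof: "is_profile 4 R" using R by (simp add: domain_gt_def)
  have RK: "R = profile_of K" unfolding K_def by (rule profile_of_map[OF prof, symmetric])
  show "perturbed_RSD R i h = perturbed_RSD R j h"
  proof (cases "map_of lottery_table K")
    case None
    then show ?thesis
      using perturbed_RSD_eq_RSD RSD_equal_treatment[OF prof ij] unfolding K_def by simp
  next
    case (Some W)
    have "\<forall>i\<in>set [0, 1, 2, 3]. \<forall>j\<in>set [0, 1, 2, 3].
        K ! i = K ! j \<longrightarrow> map (shares K) [0, 1, 2, 3] ! i = map (shares K) [0, 1, 2, 3] ! j"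
      using table_entry_ok_lookup[OF Some] unfolding table_entry_ok.simps Let_def by blast
    moreover have "i \<in> set [0, 1, 2, 3]" "j \<in> set [0, 1, 2, 3]" "K ! i = K ! j"
      using ij unfolding K_def by (auto simp: less_four_iff)
    ultimately have "map (shares K) [0, 1, 2, 3] ! i = map (shares K) [0, 1, 2, 3] ! j" by blast
    then have "shares K i = shares K j" using ij by (simp only: nth_map_four)
    moreover have "length K = 4" unfolding K_def by simp
    ultimately show ?thesis
      unfolding RK by (simp add: perturbed_RSD_profile_of[OF _ h])
  qed
qed

lemma no_gain_from_table:
  assumes "map_of lottery_table K = Some W" "i < 4" "p \<in> set perms4" "p \<noteq> K ! i"
    "in_domain4 (K[i := p])" "h < 4"
  shows "upper_share (K ! i) (shares (K[i := p]) i) h \<le> upper_share (K ! i) (shares K i) h \<and>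
    upper_share p (shares K i) h \<le> upper_share p (shares (K[i := p]) i) h"
proof -
  have "\<forall>i\<in>set [0, 1, 2, 3]. \<forall>p\<in>set perms4. no_gain_between K i (map (shares K) [0, 1, 2, 3] ! i) p"
    using table_entry_ok_lookup[OF assms(1)] unfolding table_entry_ok.simps Let_def by blast
  moreover have "i \<in> set [0, 1, 2, 3]" "h \<in> set [0, 1, 2, 3]" using assms(2,6) by (auto simp: less_four_iff)
  ultimately have "no_gain_between K i (map (shares K) [0, 1, 2, 3] ! i) p" using assms(3) by blast
  then have "\<forall>h\<in>set [0, 1, 2, 3].
      upper_share (K ! i) (shares (K[i := p]) i) h \<le> upper_share (K ! i) (shares K i) h \<and>
      upper_share p (shares K i) h \<le> upper_share p (shares (K[i := p]) i) h"
    using assms(4,5) unfolding nth_map_four[OF assms(2)] no_gain_between_def Let_def by simp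
  then show ?thesis using \<open>h \<in> set [0, 1, 2, 3]\<close> by blast
qed

lemma perturbed_RSD_strategyproof: "strategyproof 4 perturbed_RSD"
  unfolding strategyproof_def
proof (intro allI impI)
  fix i R R' and h :: nat
  assume i: "i < 4" and R: "domain_gt 4 R" and R': "domain_gt 4 R'"
    and others: "\<forall>j. j \<noteq> i \<longrightarrow> R j = R' j" and h: "h < 4"
  have prof: "is_profile 4 R" "is_profile 4 R'" using R R' by (simp_all add: domain_gt_def)
  define K K' where "K = map R [0..<4]" and "K' = map R' [0..<4]"
  have RK: "R = profile_of K" "R' = profile_of K'"
    unfolding K_def K'_def by (simp_all add: profile_of_map prof)
  have len: "length K = 4" "length K' = 4" unfolding K_def K'_def by simp_all
  have nth: "K ! i = R i" "K' ! i = R' i" using i unfolding K_def K'_def by simp_all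
  have upd: "K[i := R' i] = K'" "K'[i := R i] = K"
    using others i by (auto simp: K_def K'_def nth_list_update intro!: nth_equalityI)
  have upper: "(\<Sum>h'\<in>{h'. h' < 4 \<and> prefers (R i) h' h}. perturbed_RSD Q i h') =
      real (upper_share (R i) (shares L i) h) / 24" if "Q = profile_of L" "length L = 4" for Q L
    using upper_contour_perturbed_RSD[OF that(2)] that(1) by simp
  show "(\<Sum>h'\<in>{h'. h' < 4 \<and> prefers (R i) h' h}. perturbed_RSD R' i h')
      \<le> (\<Sum>h'\<in>{h'. h' < 4 \<and> prefers (R i) h' h}. perturbed_RSD R i h')"
  proof (cases "R' i = R i")
    case True
    then have "R' = R" using others by (metis ext)
    then show ?thesis by simp
  next
    case False
    consider "map_of lottery_table K = None" "map_of lottery_table K' = None"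
      | W where "map_of lottery_table K = Some W" | W where "map_of lottery_table K' = Some W"
      by fastforce
    then show ?thesis
    proof cases
      case 1
      then show ?thesis
        using RSD_upper_contour_mono[OF prof others i] perturbed_RSD_eq_RSD
        unfolding K_def K'_def by simp
    next
      case (2 W)
      then have "upper_share (R i) (shares K' i) h \<le> upper_share (R i) (shares K i) h"
        using no_gain_from_table[OF 2 i is_profile_in_perms4[OF prof(2) i]] False
          in_domain4_map[OF R'] h
        unfolding nth upd K'_def[symmetric] by simp
      then show ?thesis by (simp add: upper[OF RK(1) len(1)] upper[OF RK(2) len(2)] divide_right_mono)
    next
      case (3 W)
      then have "upper_share (R i) (shares K' i) h \<le> upper_share (R i) (shares K i) h"
        using no_gain_from_table[OF 3 i is_profile_in_perms4[OF prof(1) i]] False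
          in_domain4_map[OF R] h
        unfolding nth upd K_def[symmetric] by simp
      then show ?thesis by (simp add: upper[OF RK(1) len(1)] upper[OF RK(2) len(2)] divide_right_mono)
    qed
  qed
qed

lemma perturbed_RSD_differs_from_RSD: "\<exists>R. domain_gt 4 R \<and> perturbed_RSD R 0 1 \<noteq> RSD 4 R 0 1"
proof -
  define K where "K = [[0, 1, 2, 3], [0, 1, 3, 2], [0, 2, 1, 3], [0, 2, 1, 3 :: nat]]"
  have "is_profile 4 (profile_of K)"
    unfolding is_profile_def is_pref_def by (auto simp: K_def profile_of_def less_four_iff)
  moreover have "\<forall>i<4. filter (\<lambda>h. h \<noteq> 2) (profile_of K i) = [0, 1, 3]"
    by (auto simp: K_def profile_of_def less_four_iff)
  ultimately have "domain_gt 4 (profile_of K)"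
    unfolding domain_gt_def by (intro conjI exI[of _ 2] exI[of _ "[0, 1, 3]"]) simp_all
  moreover have "perturbed_RSD (profile_of K) 0 1 = 8 / 24"
    using perturbed_RSD_profile_of[of K 1 0]
    by (simp add: K_def shares_def orders_at_def lottery_table_def profile_of_def sum_list_replicate
        sd_assign_Cons del: sd_assign.simps(2))
  moreover have "RSD 4 (profile_of K) 0 1 = 10 / 24"
    unfolding RSD_four SD_lottery_Pair
    by (simp add: SD_def K_def perms4_def profile_of_def sd_assign_Cons del: sd_assign.simps(2))
  ultimately show ?thesis by auto
qed

theorem mainTheorem7:
  shows "\<exists>f. assignment_rule 4 f \<and> equal_treatment 4 f \<and> ex_post_efficient 4 f \<and>
           strategyproof 4 f \<and>
           (\<exists>R. domain_gt 4 R \<and> (\<exists>i<4. \<exists>h<4. f R i h \<noteq> RSD 4 R i h))"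
proof (intro exI[of _ perturbed_RSD] conjI)
  show "assignment_rule 4 perturbed_RSD"
    by (rule assignment_rule_if_SD_lotteries) (rule perturbed_RSD_SD_lottery)
  show "ex_post_efficient 4 perturbed_RSD"
    by (rule ex_post_efficient_if_SD_lotteries) (rule perturbed_RSD_SD_lottery)
  show "equal_treatment 4 perturbed_RSD" by (rule perturbed_RSD_equal_treatment)
  show "strategyproof 4 perturbed_RSD" by (rule perturbed_RSD_strategyproof)
  have "(0::nat) < 4" "(1::nat) < 4" by simp_all
  then show "\<exists>R. domain_gt 4 R \<and> (\<exists>i<4. \<exists>h<4. perturbed_RSD R i h \<noteq> RSD 4 R i h)"
    using perturbed_RSD_differs_from_RSD by blast
qed

end
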